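(* Let $A$ be a finite alphabet and $k\ge 0$. Then $\sim_{k+1}$ refines $\sim_k$, and $\sim_k$ is a congruence of finite index on $A^{\Delta}$ whose quotient forest algebra has idempotent and commutative horizontal monoid.
   Context: $A^{\Delta}=(H_A,V_A)$: $H_A$ is the monoid of forests over $A$ (finite ordered sequences of finite ordered $A$-labelled trees) under concatenation $+$; $V_A$ the monoid of contexts (forests with exactly one leaf replaced by a hole) acting by substitution; $as$ is the tree with root $a$ and child forest $s$. A congruence on $A^{\Delta}$ is an equivalence $\sim$ on $H_A$ with $s\sim s'\Rightarrow ps\sim ps'$ for every context $p$; the quotient forest algebra has horizontal monoid $H_A/{\sim}$ and vertical monoid the contexts modulo acting identically on classes. Equivalences $\sim_k$: $\sim_0$ identifies all forests; for $k\ge0$ and $s=a_1s_1+\cdots+a_rs_r$ ($a_i\in A$, $s_i\in H_A$) let $T^{k+1}_s=\{(a_i,[s_i]_{\sim_k}):1\le i\le r\}$, and $s\sim_{k+1}s'$ iff $T^{k+1}_s=T^{k+1}_{s'}$. *)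

theory Defs
  imports Main
begin

text \<open>Finite ordered A-labelled trees; a forest is a finite ordered list of trees.
  Horizontal composition (+) of forests is list concatenation @.\<close>
datatype 'a tree = Node 'a "'a tree list"

type_synonym 'a forest = "'a tree list"

text \<open>Contexts: forests with exactly one leaf replaced by a hole.
  CHole l r is the forest l + hole + r; CIn l a p r is l + a(p) + r.\<close>
datatype 'a ctx = CHole "'a forest" "'a forest" | CIn "'a forest" 'a "'a ctx" "'a forest"

primrec csubst :: "'a ctx \<Rightarrow> 'a forest \<Rightarrow> 'a forest" where
  "csubst (CHole l r) s = l @ s @ r"
| "csubst (CIn l a p r) s = l @ [Node a (csubst p s)] @ r"

primrec sim :: "nat \<Rightarrow> 'a forest \<Rightarrow> 'a forest \<Rightarrow> bool" where
  "sim 0 s t = True"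
| "sim (Suc k) s t =
     ((\<lambda>x. case x of Node a c \<Rightarrow> (a, {u. sim k c u})) ` set s =
      (\<lambda>x. case x of Node a c \<Rightarrow> (a, {u. sim k c u})) ` set t)"

definition forest_congruence :: "('a forest \<Rightarrow> 'a forest \<Rightarrow> bool) \<Rightarrow> bool" where
  "forest_congruence R \<longleftrightarrow> equivp R \<and>
     (\<forall>p s s'. R s s' \<longrightarrow> R (csubst p s) (csubst p s'))"

definition finite_index :: "('a forest \<Rightarrow> 'a forest \<Rightarrow> bool) \<Rightarrow> bool" where
  "finite_index R \<longleftrightarrow> finite (UNIV // {(s, t). R s t})"

definition quotient_horizontal_idem_comm :: "('a forest \<Rightarrow> 'a forest \<Rightarrow> bool) \<Rightarrow> bool" where
  "quotient_horizontal_idem_comm R \<longleftrightarrow>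
     (\<forall>s. R (s @ s) s) \<and> (\<forall>s t. R (s @ t) (t @ s))"

end

theory Submission
  imports Defs
begin

text \<open>Each sim (Suc k) is determined by the set of types (a, [c]_k) of the trees of a
  forest. Since a set forgets order and multiplicity, concatenation is idempotent and
  commutative modulo every level; since the types one level up determine those one level
  down, the levels refine each other; and by induction there are only finitely many
  classes, those of level k + 1 being indexed by sets of letter/class pairs of level k.\<close>

definition tree_type :: "nat \<Rightarrow> 'a tree \<Rightarrow> 'a \<times> 'a forest set" where
  "tree_type k x = (case x of Node a c \<Rightarrow> (a, {u. sim k c u}))"

lemma tree_type_Node [simp]: "tree_type k (Node a c) = (a, {u. sim k c u})"
  by (simp add: tree_type_def)

lemma sim_Suc_iff_types: "sim (Suc k) s t \<longleftrightarrow> tree_type k ` set s = tree_type k ` set t"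
  by (simp add: tree_type_def)

lemma equivp_sim: "equivp (sim k)"
  by (cases k) (auto intro!: equivpI reflpI sympI transpI)

lemma sim_class_eq_iff: "{u. sim k s u} = {u. sim k t u} \<longleftrightarrow> sim k s t"
proof -
  have "sim k s t \<longleftrightarrow> sim k s = sim k t"
    using equivp_sim[of k] unfolding equivp_def by blast
  then show ?thesis by (simp add: set_eq_iff fun_eq_iff)
qed

lemma image_eq_if_kernel_le:
  assumes "\<And>x y. f x = f y \<Longrightarrow> g x = g y" and "f ` A = f ` B"
  shows "g ` A = g ` B"
proof -
  have "g ` A \<subseteq> g ` B" if "f ` A = f ` B" for A B
  proof
    fix z
    assume "z \<in> g ` A"
    then obtain x where "x \<in> A" "z = g x" by blast
    moreover from \<open>x \<in> A\<close> that obtain y where "y \<in> B" "f x = f y"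
      by (metis imageE imageI)
    ultimately show "z \<in> g ` B" using assms(1) by blast
  qed
  then show ?thesis using assms(2) by (metis subset_antisym)
qed

lemma sim_Suc_imp_sim: "sim (Suc k) s t \<Longrightarrow> sim k s t"
proof (induction k arbitrary: s t)
  case 0
  then show ?case by simp
next
  case (Suc k)
  have "tree_type k x = tree_type k y"
    if "tree_type (Suc k) x = tree_type (Suc k) y" for x y :: "'a tree"
    using that Suc.IH by (cases x; cases y) (auto simp del: sim.simps simp: sim_class_eq_iff)
  then show ?case
    using Suc.prems unfolding sim_Suc_iff_types by (rule image_eq_if_kernel_le)
qed

lemma sim_append: "sim k s s' \<Longrightarrow> sim k t t' \<Longrightarrow> sim k (s @ t) (s' @ t')"
  by (cases k) (simp_all only: sim.simps(1) sim_Suc_iff_types set_append image_Un)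

lemma sim_Suc_Node: "sim k c d \<Longrightarrow> sim (Suc k) [Node a c] [Node a d]"
  unfolding sim_Suc_iff_types by (simp add: sim_class_eq_iff)

lemma sim_csubst: "sim k s t \<Longrightarrow> sim k (csubst p s) (csubst p t)"
proof (induction p arbitrary: k)
  case (CHole l r)
  then show ?case
    by (simp add: sim_append equivp_reflp[OF equivp_sim])
next
  case (CIn l a p r)
  show ?case
  proof (cases k)
    case 0
    then show ?thesis by simp
  next
    case (Suc j)
    from CIn.prems have "sim j s t"
      unfolding Suc by (rule sim_Suc_imp_sim)
    then have "sim j (csubst p s) (csubst p t)"
      by (rule CIn.IH)
    then show ?thesis
      unfolding Suc csubst.simps
      by (intro sim_append sim_Suc_Node equivp_reflp[OF equivp_sim])
  qed
qed

lemma forest_congruence_sim: "forest_congruence (sim k)"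
  unfolding forest_congruence_def by (simp add: equivp_sim sim_csubst)

lemma finite_sim_classes: "finite (range (\<lambda>s :: 'a::finite forest. {u. sim k s u}))"
proof (induction k)
  case 0
  then show ?case by simp
next
  case (Suc k)
  let ?types = "UNIV \<times> range (\<lambda>s :: 'a forest. {u. sim k s u})"
  have "range (\<lambda>s :: 'a forest. {u. sim (Suc k) s u})
      \<subseteq> (\<lambda>T. {u. tree_type k ` set u = T}) ` Pow ?types"
  proof
    fix X
    assume "X \<in> range (\<lambda>s :: 'a forest. {u. sim (Suc k) s u})"
    then obtain s where X: "X = {u. sim (Suc k) s u}" by blast
    have "tree_type k ` set s \<in> Pow ?types"
      by (auto simp: tree_type_def split: tree.splits)
    moreover have "X = {u. tree_type k ` set u = tree_type k ` set s}"
      unfolding X sim_Suc_iff_types by auto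
    ultimately show "X \<in> (\<lambda>T. {u. tree_type k ` set u = T}) ` Pow ?types" by blast
  qed
  then show ?case
    by (rule finite_subset) (use Suc.IH in simp)
qed

lemma finite_index_sim: "finite_index (sim k :: 'a::finite forest \<Rightarrow> _)"
proof -
  have "UNIV // {(s, t). sim k s t} = range (\<lambda>s :: 'a forest. {u. sim k s u})"
    by (auto simp: quotient_def Image_def)
  then show ?thesis
    unfolding finite_index_def using finite_sim_classes by metis
qed

lemma sim_append_idem: "sim k (s @ s) s"
  by (cases k) simp_all

lemma sim_append_commute: "sim k (s @ t) (t @ s)"
  by (cases k) (auto simp: Un_commute)

theorem proposition3:
  fixes k :: nat
  shows "(\<forall>s t :: ('a::finite) forest. sim (Suc k) s t \<longrightarrow> sim k s t)
     \<and> forest_congruence (sim k :: 'a forest \<Rightarrow> 'a forest \<Rightarrow> bool)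
     \<and> finite_index (sim k :: 'a forest \<Rightarrow> 'a forest \<Rightarrow> bool)
     \<and> quotient_horizontal_idem_comm (sim k :: 'a forest \<Rightarrow> 'a forest \<Rightarrow> bool)"
  using sim_Suc_imp_sim forest_congruence_sim finite_index_sim
    sim_append_idem sim_append_commute
  by (auto simp: quotient_horizontal_idem_comm_def)

end
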